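(* Let $(X_k)_{k\ge1}$ be a random walk on a finite vertex set $V$ (possibly non-Markovian and non-stationary). For an initial node $u\in V$ (i.e., $X_1=u$), assume $K(u,\{v\})<\infty$ for all $v\in V$. Then $S\mapsto K(u,S)$ is supermodular on the nonempty subsets of $V$: for all nonempty $S\subseteq T\subseteq V$ and $v\in V\setminus T$, $K(u,S\cup\{v\})-K(u,S)\le K(u,T\cup\{v\})-K(u,T)$. Consequently, for any probability distribution $\pi$ on $V$ (with these finiteness assumptions holding for each $u$ in the support of $\pi$), $K(\pi,S)=\sum_{u\in V}\pi(u)K(u,S)$ is also supermodular on the nonempty subsets of $V$.
   Context: A random walk on $V$ is a discrete-time random process $X_1,X_2,\dots$ with values in $V$ whose law is given by arbitrary conditional distributions $\Pr(X_k=\cdot\mid X_1,\dots,X_{k-1})$. For nonempty $S\subseteq V$, $\kappa(S)=\min\{k: X_k=X_1 \text{ and } X_j\in S \text{ for some } j<k\}$, and the commute time from $u$ is $K(u,S)=\mathbf{E}[\kappa(S)\mid X_1=u]$. Supermodular means the negative is submodular, where $f$ is submodular if $f(S\cup\{v\})-f(S)\ge f(T\cup\{v\})-f(T)$ for $S\subseteq T$, $v\notin T$. *)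

theory Defs
  imports "HOL-Probability.Probability"
begin

text \<open>A trajectory is a function x :: nat => 'a; only the positions 1, 2, ... are used
  (x 1 is the initial node X_1).  kappa S x = min k such that x k = x 1 and x j in S for
  some j < k (with j >= 1); it is infinite if no such k exists.\<close>
definition kappa :: "'a set \<Rightarrow> (nat \<Rightarrow> 'a) \<Rightarrow> ennreal" where
  "kappa S x =
     (if \<exists>k. x k = x 1 \<and> (\<exists>j. 1 \<le> j \<and> j < k \<and> x j \<in> S)
      then of_nat (LEAST k. x k = x 1 \<and> (\<exists>j. 1 \<le> j \<and> j < k \<and> x j \<in> S))
      else \<infinity>)"

definition commute_time :: "'w measure \<Rightarrow> (nat \<Rightarrow> 'w \<Rightarrow> 'a) \<Rightarrow> 'a set \<Rightarrow> ennreal" where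
  "commute_time M X S = (\<integral>\<^sup>+ \<omega>. kappa S (\<lambda>k. X k \<omega>) \<partial>M)"

definition walk_from :: "'a set \<Rightarrow> 'a \<Rightarrow> 'w measure \<Rightarrow> (nat \<Rightarrow> 'w \<Rightarrow> 'a) \<Rightarrow> bool" where
  "walk_from V u M X \<longleftrightarrow> prob_space M \<and>
     (\<forall>k. X k \<in> measurable M (count_space UNIV)) \<and>
     (\<forall>k. \<forall>\<omega>\<in>space M. X k \<omega> \<in> V) \<and>
     (\<forall>\<omega>\<in>space M. X 1 \<omega> = u)"

definition submodular_on :: "'a set \<Rightarrow> ('a set \<Rightarrow> real) \<Rightarrow> bool" where
  "submodular_on V f \<longleftrightarrow>
     (\<forall>S T v. S \<noteq> {} \<and> S \<subseteq> T \<and> T \<subseteq> V \<and> v \<in> V - T \<longrightarrow>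
        f (S \<union> {v}) - f S \<ge> f (T \<union> {v}) - f T)"

definition supermodular_on :: "'a set \<Rightarrow> ('a set \<Rightarrow> real) \<Rightarrow> bool" where
  "supermodular_on V f \<longleftrightarrow> submodular_on V (\<lambda>S. - f S)"

end

theory Submission imports Defs begin

text \<open>Pathwise, the set of times by which S has been visited is an upward-closed set of
  naturals, and kappa S is the first return to the start within that set.  Upward-closed sets
  are nested, so for S \<subseteq> T a case split on where the visiting times of an added set
  R sit relative to those of S and of T gives the supermodularity inequality for kappa along every path; it is
  integrated against the law of the walk, and finiteness of the commute times allows
  subtracting.  Weighted sums with nonnegative weights preserve supermodularity.\<close>

definition visited_before :: "'a set \<Rightarrow> (nat \<Rightarrow> 'a) \<Rightarrow> nat set" where
  "visited_before S x = {k. \<exists>j. 1 \<le> j \<and> j < k \<and> x j \<in> S}"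

definition first_return_in :: "nat set \<Rightarrow> (nat \<Rightarrow> 'a) \<Rightarrow> ennreal" where
  "first_return_in A x =
     (if \<exists>k. x k = x 1 \<and> k \<in> A then of_nat (LEAST k. x k = x 1 \<and> k \<in> A) else \<infinity>)"

lemma kappa_eq_first_return_in: "kappa S x = first_return_in (visited_before S x) x"
  unfolding kappa_def first_return_in_def visited_before_def by (simp only: mem_Collect_eq)

lemma first_return_in_antimono:
  assumes "A \<subseteq> B"
  shows "first_return_in B x \<le> first_return_in A x"
proof (cases "\<exists>k. x k = x 1 \<and> k \<in> A")
  case True
  let ?m = "LEAST k. x k = x 1 \<and> k \<in> A"
  have "x ?m = x 1 \<and> ?m \<in> B"
    using LeastI_ex[OF True] assms by blast
  then have "\<exists>k. x k = x 1 \<and> k \<in> B" and "(LEAST k. x k = x 1 \<and> k \<in> B) \<le> ?m"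
    by (blast, rule Least_le)
  with True show ?thesis
    unfolding first_return_in_def by simp
next
  case False
  then have "first_return_in A x = \<infinity>"
    unfolding first_return_in_def by simp
  then show ?thesis
    by simp
qed

lemma visited_before_mono: "S \<subseteq> T \<Longrightarrow> visited_before S x \<subseteq> visited_before T x"
  unfolding visited_before_def by blast

lemma visited_before_Un: "visited_before (S \<union> T) x = visited_before S x \<union> visited_before T x"
  unfolding visited_before_def by blast

lemma visited_before_upward_closed:
  assumes "a \<in> visited_before S x" and "a \<le> b"
  shows "b \<in> visited_before S x"
proof -
  obtain j where "1 \<le> j" "j < a" "x j \<in> S"
    using assms(1) unfolding visited_before_def by blast
  with assms(2) show ?thesis
    unfolding visited_before_def by (blast intro: less_le_trans)
qed

lemma visited_before_linear:
  "visited_before S x \<subseteq> visited_before T x \<or> visited_before T x \<subseteq> visited_before S x"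
proof (rule ccontr)
  assume "\<not> ?thesis"
  then obtain a b where "a \<in> visited_before S x" "a \<notin> visited_before T x"
    and "b \<in> visited_before T x" "b \<notin> visited_before S x"
    by blast
  then show False
    using visited_before_upward_closed nle_le by metis
qed

lemma kappa_antimono: "S \<subseteq> T \<Longrightarrow> kappa T x \<le> kappa S x"
  unfolding kappa_eq_first_return_in
  by (intro first_return_in_antimono visited_before_mono)

lemma kappa_Un_supermodular:
  assumes "S \<subseteq> T"
  shows "kappa (S \<union> R) x + kappa T x \<le> kappa (T \<union> R) x + kappa S x"
proof -
  let ?H = "\<lambda>A. visited_before A x" and ?F = "\<lambda>A. first_return_in A x"
  have ST: "?H S \<subseteq> ?H T"
    using assms by (rule visited_before_mono)
  consider "?H R \<subseteq> ?H S" | "?H S \<subseteq> ?H R" "?H R \<subseteq> ?H T" | "?H T \<subseteq> ?H R"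
    using visited_before_linear[of R x S] visited_before_linear[of R x T] by blast
  then show ?thesis
  proof cases
    case 1
    with ST have "?H (S \<union> R) = ?H S" "?H (T \<union> R) = ?H T"
      by (auto simp: visited_before_Un)
    then show ?thesis
      unfolding kappa_eq_first_return_in by (simp add: add.commute)
  next
    case 2
    then have "?H (S \<union> R) = ?H R" "?H (T \<union> R) = ?H T"
      by (auto simp: visited_before_Un)
    moreover have "?F (?H R) \<le> ?F (?H S)"
      using 2(1) by (rule first_return_in_antimono)
    ultimately show ?thesis
      unfolding kappa_eq_first_return_in by (simp add: add.commute add_right_mono)
  next
    case 3
    with ST have "?H (S \<union> R) = ?H R" "?H (T \<union> R) = ?H R"
      by (auto simp: visited_before_Un)
    moreover have "?F (?H T) \<le> ?F (?H S)"
      using ST by (rule first_return_in_antimono)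
    ultimately show ?thesis
      unfolding kappa_eq_first_return_in by (simp add: add_left_mono)
  qed
qed

lemma INF_of_nat_eq_Least:
  "(INF k. if P k then of_nat k else \<infinity> :: ennreal)
     = (if \<exists>k. P k then of_nat (LEAST k. P k) else \<infinity>)"
proof (cases "\<exists>k. P k")
  case True
  have "(INF k. if P k then of_nat k else \<infinity> :: ennreal) = of_nat (LEAST k. P k)"
  proof (rule antisym)
    show "(INF k. if P k then of_nat k else \<infinity> :: ennreal) \<le> of_nat (LEAST k. P k)"
      by (rule INF_lower2[of "LEAST k. P k"]) (simp_all add: LeastI_ex[OF True])
    show "of_nat (LEAST k. P k) \<le> (INF k. if P k then of_nat k else \<infinity> :: ennreal)"
      by (rule INF_greatest) (simp add: Least_le)
  qed
  with True show ?thesis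
    by simp
qed simp

lemma kappa_eq_INF:
  "kappa S x = (INF k. if x k = x 1 \<and> (\<exists>j. 1 \<le> j \<and> j < k \<and> x j \<in> S) then of_nat k else \<infinity>)"
  unfolding kappa_def INF_of_nat_eq_Least ..

lemma borel_measurable_kappa:
  assumes "walk_from V u M X"
  shows "(\<lambda>\<omega>. kappa S (\<lambda>k. X k \<omega>)) \<in> borel_measurable M"
proof -
  have [measurable]: "X k \<in> measurable M (count_space UNIV)" for k
    using assms unfolding walk_from_def by auto
  have [measurable]: "Measurable.pred M (\<lambda>\<omega>. X k \<omega> \<in> A)" for k A
    by (rule pred_sets2[where N="count_space UNIV"]) auto
  have [measurable]: "Measurable.pred M (\<lambda>\<omega>. X k \<omega> = a)" for k a
    using pred_sets2[where N="count_space UNIV" and A="{a}" and f="X k"] by simp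
  \<comment> \<open>The start is the constant u: comparing X k with X 1 directly would need a
    measurable diagonal in the product of count spaces.\<close>
  have "(\<lambda>\<omega>. INF k. if X k \<omega> = u \<and> (\<exists>j. 1 \<le> j \<and> j < k \<and> X j \<omega> \<in> S)
                    then of_nat k else \<infinity>::ennreal) \<in> borel_measurable M"
    by measurable
  moreover have "X 1 \<omega> = u" if "\<omega> \<in> space M" for \<omega>
    using assms that unfolding walk_from_def by auto
  ultimately show ?thesis
    unfolding kappa_eq_INF by (simp cong: measurable_cong)
qed

lemma commute_time_antimono: "S \<subseteq> T \<Longrightarrow> commute_time M X T \<le> commute_time M X S"
  unfolding commute_time_def by (intro nn_integral_mono kappa_antimono)

lemma commute_time_less_top:
  assumes "\<forall>v\<in>V. commute_time M X {v} < \<infinity>" and "A \<noteq> {}" and "A \<subseteq> V"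
  shows "commute_time M X A < \<infinity>"
proof -
  obtain v where "v \<in> A"
    using assms(2) by blast
  then have "commute_time M X A \<le> commute_time M X {v}"
    by (intro commute_time_antimono) simp
  also have "\<dots> < \<infinity>"
    using assms(1,3) \<open>v \<in> A\<close> by blast
  finally show ?thesis .
qed

lemma commute_time_Un_supermodular:
  assumes "walk_from V u M X" and "S \<subseteq> T"
  shows "commute_time M X (S \<union> R) + commute_time M X T
           \<le> commute_time M X (T \<union> R) + commute_time M X S"
proof -
  note meas = borel_measurable_kappa[OF assms(1)]
  have "commute_time M X (S \<union> R) + commute_time M X T
          = (\<integral>\<^sup>+ \<omega>. kappa (S \<union> R) (\<lambda>k. X k \<omega>) + kappa T (\<lambda>k. X k \<omega>) \<partial>M)"
    unfolding commute_time_def by (rule nn_integral_add[symmetric]) (rule meas)+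
  also have "\<dots> \<le> (\<integral>\<^sup>+ \<omega>. kappa (T \<union> R) (\<lambda>k. X k \<omega>) + kappa S (\<lambda>k. X k \<omega>) \<partial>M)"
    using assms(2) by (intro nn_integral_mono kappa_Un_supermodular)
  also have "\<dots> = commute_time M X (T \<union> R) + commute_time M X S"
    unfolding commute_time_def by (rule nn_integral_add) (rule meas)+
  finally show ?thesis .
qed

lemma supermodular_on_iff:
  "supermodular_on V f \<longleftrightarrow>
     (\<forall>S T v. S \<noteq> {} \<and> S \<subseteq> T \<and> T \<subseteq> V \<and> v \<in> V - T \<longrightarrow>
        f (S \<union> {v}) + f T \<le> f (T \<union> {v}) + f S)"
  unfolding supermodular_on_def submodular_on_def by (intro iff_allI) argo

lemma supermodular_on_weighted_sum:
  assumes "\<forall>i\<in>I. 0 \<le> w i"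
    and "\<forall>i\<in>I. 0 < w i \<longrightarrow> supermodular_on V (f i)"
  shows "supermodular_on V (\<lambda>S. \<Sum>i\<in>I. w i * f i S)"
  unfolding supermodular_on_iff
proof (intro allI impI)
  fix S T v
  assume STv: "S \<noteq> {} \<and> S \<subseteq> T \<and> T \<subseteq> V \<and> v \<in> V - T"
  have "w i * (f i (S \<union> {v}) + f i T) \<le> w i * (f i (T \<union> {v}) + f i S)" if "i \<in> I" for i
  proof (cases "w i = 0")
    case False
    with assms that have "supermodular_on V (f i)"
      by auto
    with STv have "f i (S \<union> {v}) + f i T \<le> f i (T \<union> {v}) + f i S"
      unfolding supermodular_on_iff by blast
    with assms(1) that show ?thesis
      by (intro mult_left_mono) auto
  qed simp
  then have "(\<Sum>i\<in>I. w i * (f i (S \<union> {v}) + f i T)) \<le> (\<Sum>i\<in>I. w i * (f i (T \<union> {v}) + f i S))"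
    by (rule sum_mono)
  then show "(\<Sum>i\<in>I. w i * f i (S \<union> {v})) + (\<Sum>i\<in>I. w i * f i T)
               \<le> (\<Sum>i\<in>I. w i * f i (T \<union> {v})) + (\<Sum>i\<in>I. w i * f i S)"
    by (simp add: distrib_left sum.distrib)
qed

lemma supermodular_on_commute_time:
  assumes walk: "walk_from V u M X" and fin: "\<forall>v\<in>V. commute_time M X {v} < \<infinity>"
  shows "supermodular_on V (\<lambda>S. enn2real (commute_time M X S))"
  unfolding supermodular_on_iff
proof (intro allI impI)
  fix S T v
  assume STv: "S \<noteq> {} \<and> S \<subseteq> T \<and> T \<subseteq> V \<and> v \<in> V - T"
  let ?K = "commute_time M X"
  have finite: "?K A < \<infinity>" if "A \<in> {S \<union> {v}, T, T \<union> {v}, S}" for A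
    using that STv by (intro commute_time_less_top[OF fin]) auto
  have "?K (S \<union> {v}) + ?K T \<le> ?K (T \<union> {v}) + ?K S"
    using walk STv by (intro commute_time_Un_supermodular) auto
  then have "enn2real (?K (S \<union> {v}) + ?K T) \<le> enn2real (?K (T \<union> {v}) + ?K S)"
    using finite by (intro enn2real_mono) auto
  then show "enn2real (?K (S \<union> {v})) + enn2real (?K T) \<le> enn2real (?K (T \<union> {v})) + enn2real (?K S)"
    using finite by (simp add: enn2real_plus)
qed

theorem lemma10:
  fixes V :: "'a set"
    and M :: "'a \<Rightarrow> 'w measure"
    and X :: "'a \<Rightarrow> nat \<Rightarrow> 'w \<Rightarrow> 'a"
  assumes "finite V"
    and walks: "\<And>u. u \<in> V \<Longrightarrow> walk_from V u (M u) (X u)"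
  shows "(\<forall>u\<in>V. (\<forall>v\<in>V. commute_time (M u) (X u) {v} < \<infinity>) \<longrightarrow>
            supermodular_on V (\<lambda>S. enn2real (commute_time (M u) (X u) S)))
       \<and> (\<forall>\<pi> :: 'a \<Rightarrow> real.
            (\<forall>u\<in>V. \<pi> u \<ge> 0) \<and> (\<Sum>u\<in>V. \<pi> u) = 1 \<and>
            (\<forall>u\<in>V. \<pi> u > 0 \<longrightarrow> (\<forall>v\<in>V. commute_time (M u) (X u) {v} < \<infinity>)) \<longrightarrow>
            supermodular_on V (\<lambda>S. \<Sum>u\<in>V. \<pi> u * enn2real (commute_time (M u) (X u) S)))"
proof (intro conjI ballI impI allI)
  fix u
  assume "u \<in> V" and "\<forall>v\<in>V. commute_time (M u) (X u) {v} < \<infinity>"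
  then show "supermodular_on V (\<lambda>S. enn2real (commute_time (M u) (X u) S))"
    using walks[OF \<open>u \<in> V\<close>] by (intro supermodular_on_commute_time)
next
  fix \<pi> :: "'a \<Rightarrow> real"
  assume \<pi>: "(\<forall>u\<in>V. \<pi> u \<ge> 0) \<and> (\<Sum>u\<in>V. \<pi> u) = 1 \<and>
            (\<forall>u\<in>V. \<pi> u > 0 \<longrightarrow> (\<forall>v\<in>V. commute_time (M u) (X u) {v} < \<infinity>))"
  have "\<forall>u\<in>V. 0 < \<pi> u \<longrightarrow> supermodular_on V (\<lambda>S. enn2real (commute_time (M u) (X u) S))"
    using \<pi> walks by (blast intro: supermodular_on_commute_time)
  then show "supermodular_on V (\<lambda>S. \<Sum>u\<in>V. \<pi> u * enn2real (commute_time (M u) (X u) S))"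
    using \<pi> by (intro supermodular_on_weighted_sum) simp_all
qed

end
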